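(* Let $H:\mathbb{R}^{2m}\to\mathbb{R}$ be smooth and consider the canonical Hamiltonian system $\dot x^k=\partial H/\partial p^k$, $\dot p^k=-\partial H/\partial x^k$. Let $\bar y\in\mathbb{R}^{2m}$ with $F'=SH_{yy}(\bar y)$ invertible. Consider the scheme $$y_{n+1}-y_n=\theta_n\,S\,\bar\nabla H(y_n,y_{n+1}),\qquad \theta_n=2\Big(SR+F'\coth\frac{h_nF'}{2}\Big)^{-1},$$ where $\bar\nabla H$ is the coordinate increment discrete gradient. Here $R=(R_{jk})$ is the antisymmetric $2m\times 2m$ matrix with $$R_{jk}=H_{y^jy^k}\ (k<j),\qquad R_{jj}=0,\qquad R_{jk}=-H_{y^jy^k}\ (k>j).$$ $F'$ and $R$ are evaluated at $\bar y$. Then this scheme is locally exact at $\bar y$.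
   Context: Notation: - $y=(x,p)\in\mathbb{R}^{2m}$, i.e. $y^1=x^1,\dots,y^m=x^m$, $y^{m+1}=p^1,\dots,y^{2m}=p^m$; $y_n=(x_n,p_n)$ and $h_n$ is the time step. - $S=\begin{pmatrix}0&1\\-1&0\end{pmatrix}$ with $m\times m$ blocks. - $H_{yy}$ is the Hessian, so $F'=\begin{pmatrix}H_{px}&H_{pp}\\ -H_{xx}&-H_{xp}\end{pmatrix}$ at $\bar y$, and $F=SH_y=(H_p,-H_x)^T$ at $\bar y$. The coordinate increment discrete gradient has components $$\frac{\Delta H}{\Delta y^j}=\frac{H(\hat y^j_n)-H(\hat y^{j-1}_n)}{y^j_{n+1}-y^j_n},\qquad \hat y^j_n=(y^1_{n+1},\dots,y^j_{n+1},y^{j+1}_n,\dots,y^{2m}_n),$$ with the partial derivative as limit when $y^j_{n+1}=y^j_n$. The exact discretization of the linearized system $\dot\nu=F'\nu+F$ (with $\nu=y-\bar y$) is $\nu_{n+1}=e^{h_nF'}\nu_n+(e^{h_nF'}-1)(F')^{-1}F$. The linearization of the scheme at $\bar y$ is obtained as follows: - substitute $y_n=\bar y+\nu_n$ and $y_{n+1}=\bar y+\nu_{n+1}$; - keep $\theta_n$ fixed at its value at $\bar y$; - keep terms to first order in $\nu$. The scheme is locally exact at $\bar y$ if the resulting linear relation coincides with the exact discretization, as a relation determining $\nu_{n+1}$ from $\nu_n$. *)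

theory Defs
  imports "HOL-Analysis.Analysis"
begin

text \<open>Coordinates of y = (x,p) in R^(2m) are indexed by bool \<times> 'm:
  (False,k) is x^k and (True,k) is p^k.  The linear order y^1,...,y^(2m) of the
  paper (x^1..x^m, p^1..p^m) is the lexicographic order below, with 'm linearly ordered.\<close>

definition idx_lt :: "bool \<times> 'm::linorder \<Rightarrow> bool \<times> 'm \<Rightarrow> bool" where
  "idx_lt a b \<longleftrightarrow> fst a < fst b \<or> (fst a = fst b \<and> snd a < snd b)"

definition idx_le :: "bool \<times> 'm::linorder \<Rightarrow> bool \<times> 'm \<Rightarrow> bool" where
  "idx_le a b \<longleftrightarrow> idx_lt a b \<or> a = b"

text \<open>The symplectic matrix S = ((0,1),(-1,0)) in m \<times> m blocks.\<close>
definition symp :: "real ^ (bool \<times> 'm::finite) ^ (bool \<times> 'm)" where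
  "symp = (\<chi> a b. if snd a = snd b then
             (if \<not> fst a \<and> fst b then 1 else if fst a \<and> \<not> fst b then -1 else 0) else 0)"

definition partial :: "'i \<Rightarrow> (real ^ 'i \<Rightarrow> real) \<Rightarrow> real ^ 'i \<Rightarrow> real" where
  "partial i f y = deriv (\<lambda>t. f (y + t *\<^sub>R axis i 1)) 0"

fun iter_partial :: "'i list \<Rightarrow> (real ^ 'i \<Rightarrow> real) \<Rightarrow> real ^ 'i \<Rightarrow> real" where
  "iter_partial [] f = f"
| "iter_partial (i # is) f = partial i (iter_partial is f)"

definition smooth :: "(real ^ 'i \<Rightarrow> real) \<Rightarrow> bool" where
  "smooth f \<longleftrightarrow> (\<forall>is. continuous_on UNIV (iter_partial is f) \<and>
      (\<forall>i y. (\<lambda>t. iter_partial is f (y + t *\<^sub>R axis i 1)) differentiable (at 0)))"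

definition grad :: "(real ^ 'i \<Rightarrow> real) \<Rightarrow> real ^ 'i \<Rightarrow> real ^ 'i" where
  "grad f y = (\<chi> j. partial j f y)"

definition hess :: "(real ^ 'i \<Rightarrow> real) \<Rightarrow> real ^ 'i \<Rightarrow> real ^ 'i ^ 'i" where
  "hess f y = (\<chi> j k. partial j (partial k f) y)"

definition mat_exp :: "real ^ 'n ^ 'n \<Rightarrow> real ^ 'n ^ 'n" where
  "mat_exp A = (\<Sum>k. (1 / fact k) *\<^sub>R (((**) A) ^^ k) (mat 1))"

definition mat_sinh :: "real ^ 'n ^ 'n \<Rightarrow> real ^ 'n ^ 'n" where
  "mat_sinh A = (1/2) *\<^sub>R (mat_exp A - mat_exp (- A))"

definition mat_cosh :: "real ^ 'n ^ 'n \<Rightarrow> real ^ 'n ^ 'n" where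
  "mat_cosh A = (1/2) *\<^sub>R (mat_exp A + mat_exp (- A))"

definition mat_coth :: "real ^ 'n ^ 'n \<Rightarrow> real ^ 'n ^ 'n" where
  "mat_coth A = mat_cosh A ** matrix_inv (mat_sinh A)"

text \<open>Points yhat^j (coordinates up to and including j from y', the rest from y)
  and yhat^(j-1) (coordinates strictly before j from y').\<close>
definition hat_le :: "bool \<times> 'm::{finite,linorder} \<Rightarrow> real ^ (bool \<times> 'm) \<Rightarrow> real ^ (bool \<times> 'm) \<Rightarrow> real ^ (bool \<times> 'm)" where
  "hat_le j y y' = (\<chi> k. if idx_le k j then y' $ k else y $ k)"

definition hat_lt :: "bool \<times> 'm::{finite,linorder} \<Rightarrow> real ^ (bool \<times> 'm) \<Rightarrow> real ^ (bool \<times> 'm) \<Rightarrow> real ^ (bool \<times> 'm)" where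
  "hat_lt j y y' = (\<chi> k. if idx_lt k j then y' $ k else y $ k)"

definition coord_incr_dg :: "(real ^ (bool \<times> 'm::{finite,linorder}) \<Rightarrow> real) \<Rightarrow> real ^ (bool \<times> 'm) \<Rightarrow> real ^ (bool \<times> 'm) \<Rightarrow> real ^ (bool \<times> 'm)" where
  "coord_incr_dg H y y' = (\<chi> j. if y' $ j = y $ j then partial j H (hat_le j y y')
      else (H (hat_le j y y') - H (hat_lt j y y')) / (y' $ j - y $ j))"

definition Rmat :: "(real ^ (bool \<times> 'm::{finite,linorder}) \<Rightarrow> real) \<Rightarrow> real ^ (bool \<times> 'm) \<Rightarrow> real ^ (bool \<times> 'm) ^ (bool \<times> 'm)" where
  "Rmat H y = (\<chi> j k. if idx_lt k j then hess H y $ j $ k else if k = j then 0 else - (hess H y $ j $ k))"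

definition theta :: "(real ^ (bool \<times> 'm::{finite,linorder}) \<Rightarrow> real) \<Rightarrow> real ^ (bool \<times> 'm) \<Rightarrow> real \<Rightarrow> real ^ (bool \<times> 'm) ^ (bool \<times> 'm)" where
  "theta H ybar h = 2 *\<^sub>R matrix_inv (symp ** Rmat H ybar
       + (symp ** hess H ybar) ** mat_coth ((h / 2) *\<^sub>R (symp ** hess H ybar)))"

text \<open>Scheme residual in the deviation variables nu = y - ybar:
  G(nu_n, nu_{n+1}) = nu_{n+1} - nu_n - theta S DG(ybar+nu_n, ybar+nu_{n+1}), theta frozen at ybar.\<close>
definition scheme_resid :: "(real ^ (bool \<times> 'm::{finite,linorder}) \<Rightarrow> real) \<Rightarrow> real ^ (bool \<times> 'm) \<Rightarrow> real \<Rightarrow> (real ^ (bool \<times> 'm)) \<times> (real ^ (bool \<times> 'm)) \<Rightarrow> real ^ (bool \<times> 'm)" where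
  "scheme_resid H ybar h = (\<lambda>(\<nu>, \<nu>'). \<nu>' - \<nu> - theta H ybar h *v (symp *v coord_incr_dg H (ybar + \<nu>) (ybar + \<nu>')))"

end

theory Submission
  imports Defs
begin

text \<open>Linearised at ybar, the j-th component of the coordinate increment discrete gradient is
  H_y + H_yy applied to a vector that takes the coordinates before j from the new point, coordinate
  j at the midpoint and the later ones from the old point; this equals
  H_y + 1/2 H_yy (nu_n + nu_(n+1)) + 1/2 R (nu_(n+1) - nu_n), and R records exactly the asymmetry
  (symmetry of H_yy is needed here).  With theta = 2 (S R + F' coth(h F'/2))^(-1) the R-terms
  cancel and the linearised scheme becomes
  coth(h F'/2) (nu_(n+1) - nu_n) = nu_n + nu_(n+1) + 2 F'^(-1) F.
  Multiplying by sinh(h F'/2) and writing it through exp(+-h F'/2) gives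
  exp(-h F'/2) nu_(n+1) = exp(h F'/2) nu_n + sinh(h F'/2) 2 F'^(-1) F, which is the exact
  discretisation nu_(n+1) = exp(h F') nu_n + (exp(h F') - 1) F'^(-1) F.\<close>

section \<open>Exponentials of matrices\<close>

definition matpow :: "real^'n^'n \<Rightarrow> nat \<Rightarrow> real^'n^'n" where
  "matpow A k = (((**) A) ^^ k) (mat 1)"

lemma matpow_0 [simp]: "matpow A 0 = mat 1"
  by (simp add: matpow_def)

lemma matpow_Suc: "matpow A (Suc k) = A ** matpow A k"
  by (simp add: matpow_def)

lemma matpow_add: "matpow A (p + q) = matpow A p ** matpow A q"
  by (induction p) (simp_all add: matpow_Suc matrix_mul_assoc)

lemma matpow_scaleR: "matpow (t *\<^sub>R A) k = (t ^ k) *\<^sub>R matpow A k"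
proof (induction k)
  case (Suc k)
  have "(t *\<^sub>R A) ** ((t ^ k) *\<^sub>R matpow A k) = (t * t ^ k) *\<^sub>R (A ** matpow A k)"
    by (simp add: matrix_scalar_ac scalar_matrix_assoc mult.commute)
  then show ?case using Suc by (simp add: matpow_Suc)
qed simp

lemma abs_matpow_entry_le:
  fixes A :: "real^'n^'n"
  shows "\<bar>matpow A k $ i $ j\<bar> \<le> ((\<Sum>i\<in>UNIV. \<Sum>l\<in>UNIV. \<bar>A$i$l\<bar>) + 1) ^ k"
proof (induction k arbitrary: i j)
  case 0
  then show ?case by (simp add: mat_def)
next
  case (Suc k)
  define \<mu> where "\<mu> = (\<Sum>i\<in>UNIV. \<Sum>l\<in>UNIV. \<bar>A$i$l\<bar>) + 1"
  have "0 \<le> \<mu> ^ k" unfolding \<mu>_def by (simp add: sum_nonneg add_nonneg_pos)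
  moreover have "(\<Sum>l\<in>UNIV. \<bar>A$i$l\<bar>) \<le> \<mu>"
    using member_le_sum[of i UNIV "\<lambda>i. \<Sum>l\<in>UNIV. \<bar>A$i$l\<bar>"] unfolding \<mu>_def
    by (simp add: sum_nonneg)
  moreover have "\<bar>matpow A (Suc k) $ i $ j\<bar> \<le> (\<Sum>l\<in>UNIV. \<bar>A$i$l\<bar> * \<mu> ^ k)"
    unfolding matpow_Suc matrix_matrix_mult_def \<mu>_def
    by (auto intro!: order_trans[OF sum_abs] sum_mono mult_left_mono Suc simp: abs_mult)
  ultimately show ?case
    unfolding \<mu>_def[symmetric] sum_distrib_right[symmetric]
    by (metis mult_right_mono order_trans power_Suc)
qed

lemma summable_exp_matpow_entry:
  fixes A :: "real^'n^'n"
  shows "summable (\<lambda>k. norm ((1 / fact k) * (t ^ k * matpow A k $ i $ j)))"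
proof (rule summable_comparison_test'[OF summable_exp])
  define \<mu> where "\<mu> = (\<Sum>i\<in>UNIV. \<Sum>l\<in>UNIV. \<bar>A$i$l\<bar>) + 1"
  fix k :: nat
  have "norm (norm ((1 / fact k) * (t ^ k * matpow A k $ i $ j)))
      = inverse (fact k) * (\<bar>t\<bar> ^ k * \<bar>matpow A k $ i $ j\<bar>)"
    by (simp add: abs_mult power_abs divide_inverse)
  also have "\<dots> \<le> inverse (fact k) * (\<bar>t\<bar> ^ k * \<mu> ^ k)"
    unfolding \<mu>_def by (intro mult_left_mono abs_matpow_entry_le) auto
  finally show "norm (norm ((1 / fact k) * (t ^ k * matpow A k $ i $ j)))
      \<le> inverse (fact k) * (\<bar>t\<bar> * \<mu>) ^ k"
    by (simp add: power_mult_distrib)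
qed

lemma suminf_matrix_entry:
  fixes f :: "nat \<Rightarrow> real^'n^'m"
  assumes "\<And>i j. summable (\<lambda>k. f k $ i $ j)"
  shows "suminf f $ i $ j = (\<Sum>k. f k $ i $ j)"
proof -
  have "f sums (\<chi> i j. \<Sum>k. f k $ i $ j)"
    unfolding sums_def by (intro vec_tendstoI) (simp add: summable_LIMSEQ[OF assms])
  then show ?thesis by (simp add: sums_unique[symmetric])
qed

lemma mat_exp_scaleR_entry:
  fixes A :: "real^'n^'n"
  shows "mat_exp (t *\<^sub>R A) $ i $ j = (\<Sum>k. (1 / fact k) * (t ^ k * matpow A k $ i $ j))"
proof -
  have "mat_exp (t *\<^sub>R A) = (\<Sum>k. (1 / fact k) *\<^sub>R (t ^ k *\<^sub>R matpow A k))"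
    unfolding mat_exp_def using matpow_scaleR[of t A] by (simp add: matpow_def)
  also have "\<dots> $ i $ j = (\<Sum>k. (1 / fact k) * (t ^ k * matpow A k $ i $ j))"
    by (subst suminf_matrix_entry) (use summable_norm_cancel[OF summable_exp_matpow_entry] in simp_all)
  finally show ?thesis .
qed

lemma mat_exp_zero: "mat_exp (0 :: real^'n^'n) = mat 1"
proof -
  have "mat_exp (0 *\<^sub>R (0 :: real^'n^'n)) $ i $ j = mat 1 $ i $ j" for i j
  proof -
    have "(\<lambda>k. (1 / fact k) * (0 ^ k * matpow 0 k $ i $ j)) = (\<lambda>k. if k = 0 then mat 1 $ i $ j else 0)"
      by (auto simp: power_0_left)
    then show ?thesis
      unfolding mat_exp_scaleR_entry by (simp add: sums_unique[OF sums_single, symmetric])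
  qed
  then show ?thesis by (simp add: vec_eq_iff)
qed

lemma mat_exp_scaleR_add:
  fixes A :: "real^'n^'n"
  shows "mat_exp (s *\<^sub>R A) ** mat_exp (t *\<^sub>R A) = mat_exp ((s + t) *\<^sub>R A)"
proof -
  have "(mat_exp (s *\<^sub>R A) ** mat_exp (t *\<^sub>R A)) $ i $ j = mat_exp ((s + t) *\<^sub>R A) $ i $ j" for i j
  proof -
    define a where "a l k = (1 / fact k) * (s ^ k * matpow A k $ i $ l)" for l k
    define b where "b l k = (1 / fact k) * (t ^ k * matpow A k $ l $ j)" for l k
    have sa: "summable (\<lambda>k. norm (a l k))" for l unfolding a_def by (rule summable_exp_matpow_entry)
    have sb: "summable (\<lambda>k. norm (b l k))" for l unfolding b_def by (rule summable_exp_matpow_entry)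
    have binomial_coeff: "(1 / fact p) * (1 / fact (n - p)) = (1 / fact n) * real (n choose p)"
      if "p \<le> n" for p n :: nat
      using binomial_fact[OF that, where 'a=real] by (simp add: field_simps)
    have cauchy: "(\<Sum>l\<in>UNIV. \<Sum>p\<le>n. a l p * b l (n - p)) = (1 / fact n) * ((s + t) ^ n * matpow A n $ i $ j)"
      for n
    proof -
      have "(\<Sum>l\<in>UNIV. \<Sum>p\<le>n. a l p * b l (n - p))
          = (\<Sum>p\<le>n. (1 / fact p) * (1 / fact (n - p)) * (s ^ p * t ^ (n - p)) *
               (matpow A p ** matpow A (n - p)) $ i $ j)"
        unfolding a_def b_def matrix_matrix_mult_def
        by (subst sum.swap) (simp add: sum_distrib_left mult_ac)
      also have "\<dots> = (\<Sum>p\<le>n. (1 / fact n) * (real (n choose p) * s ^ p * t ^ (n - p)) * matpow A n $ i $ j)"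
      proof (intro sum.cong refl)
        fix p assume "p \<in> {..n}"
        then have "p \<le> n" by simp
        then show "(1 / fact p) * (1 / fact (n - p)) * (s ^ p * t ^ (n - p)) * (matpow A p ** matpow A (n - p)) $ i $ j
            = (1 / fact n) * (real (n choose p) * s ^ p * t ^ (n - p)) * matpow A n $ i $ j"
          using binomial_coeff[of p n] by (simp add: matpow_add[symmetric])
      qed
      also have "\<dots> = (1 / fact n) * ((s + t) ^ n * matpow A n $ i $ j)"
        by (simp add: binomial_ring sum_distrib_left sum_distrib_right mult_ac)
      finally show ?thesis .
    qed
    have "(mat_exp (s *\<^sub>R A) ** mat_exp (t *\<^sub>R A)) $ i $ j = (\<Sum>l\<in>UNIV. (\<Sum>k. a l k) * (\<Sum>k. b l k))"
      by (simp add: matrix_matrix_mult_def mat_exp_scaleR_entry a_def b_def)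
    also have "\<dots> = (\<Sum>l\<in>UNIV. \<Sum>n. \<Sum>p\<le>n. a l p * b l (n - p))"
      by (simp add: Cauchy_product[OF sa sb])
    also have "\<dots> = (\<Sum>n. \<Sum>l\<in>UNIV. \<Sum>p\<le>n. a l p * b l (n - p))"
      by (rule suminf_sum[symmetric]) (rule sums_summable[OF Cauchy_product_sums[OF sa sb]])
    also have "\<dots> = mat_exp ((s + t) *\<^sub>R A) $ i $ j"
      by (simp add: cauchy mat_exp_scaleR_entry)
    finally show ?thesis .
  qed
  then show ?thesis by (simp add: vec_eq_iff)
qed

section \<open>Partial derivatives\<close>

lemma smooth_iter_partial_differentiable_axis:
  "smooth H \<Longrightarrow> (\<lambda>t. iter_partial ps H (y + t *\<^sub>R axis i 1)) differentiable (at 0)"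
  unfolding smooth_def by blast

lemma smooth_iter_partial_isCont: "smooth H \<Longrightarrow> isCont (iter_partial ps H) x"
  unfolding smooth_def by (metis continuous_on_eq_continuous_at open_UNIV UNIV_I)

lemma partial_has_real_derivative_axis:
  fixes f :: "real^'n \<Rightarrow> real"
  assumes "\<And>y. (\<lambda>t. f (y + t *\<^sub>R axis i 1)) differentiable (at 0)"
  shows "((\<lambda>t. f (w + t *\<^sub>R axis i 1)) has_real_derivative partial i f (w + r *\<^sub>R axis i 1)) (at r)"
proof -
  let ?y = "w + r *\<^sub>R axis i 1"
  have "((\<lambda>t. f (?y + t *\<^sub>R axis i 1)) has_real_derivative partial i f ?y) (at 0)"
    using assms[of ?y] unfolding partial_def by (simp add: DERIV_deriv_iff_real_differentiable)
  moreover have "(\<lambda>t. f (?y + t *\<^sub>R axis i 1)) = (\<lambda>t. f (w + (t + r) *\<^sub>R axis i 1))"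
    by (simp add: algebra_simps)
  ultimately show ?thesis
    using DERIV_shift[of "\<lambda>t. f (w + t *\<^sub>R axis i 1)" _ 0 r] by simp
qed

lemma MVT_between:
  fixes \<phi> :: "real \<Rightarrow> real"
  assumes "\<And>r. (\<phi> has_real_derivative \<phi>' r) (at r)"
  shows "\<exists>\<xi>. min a b \<le> \<xi> \<and> \<xi> \<le> max a b \<and> \<phi> b - \<phi> a = (b - a) * \<phi>' \<xi>"
proof (cases a b rule: linorder_cases)
  case less
  then obtain z where "a < z" "z < b" "\<phi> b - \<phi> a = (b - a) * \<phi>' z"
    using MVT2[of a b \<phi> \<phi>'] assms by blast
  then show ?thesis using less by (intro exI[of _ z]) auto
next
  case equal
  then show ?thesis by (intro exI[of _ a]) auto
next
  case greater
  then obtain z where "b < z" "z < a" "\<phi> a - \<phi> b = (a - b) * \<phi>' z"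
    using MVT2[of b a \<phi> \<phi>'] assms by blast
  then show ?thesis using greater by (intro exI[of _ z]) (auto simp: algebra_simps)
qed

lemma sum_axis_nth:
  "finite S \<Longrightarrow> (\<Sum>i\<in>S. (v$i) *\<^sub>R axis i (1::real)) $ k = (if k \<in> S then v$k else 0)"
  by (simp add: axis_def if_distrib[where f="\<lambda>x. _ * x"] sum.delta cong: if_cong)

lemma increment_along_axes_le:
  fixes f :: "real^'n \<Rightarrow> real"
  assumes D: "\<And>i y. (\<lambda>t. f (y + t *\<^sub>R axis i 1)) differentiable (at 0)"
    and osc: "\<And>w i. norm (w - x0) < \<delta> \<Longrightarrow> \<bar>partial i f w - partial i f x0\<bar> \<le> \<epsilon>"
    and v: "norm v < \<delta>"
  shows "\<bar>f (x0 + (\<Sum>i\<in>S. (v$i) *\<^sub>R axis i 1)) - f x0 - (\<Sum>i\<in>S. partial i f x0 * v$i)\<bar>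
        \<le> \<epsilon> * (\<Sum>i\<in>S. \<bar>v$i\<bar>)"
proof (induction S rule: finite_induct[OF finite])
  case 1
  then show ?case by simp
next
  case (2 i S)
  define p where "p = (\<Sum>i\<in>S. (v$i) *\<^sub>R axis i (1::real))"
  obtain \<xi> where xi: "min 0 (v$i) \<le> \<xi>" "\<xi> \<le> max 0 (v$i)"
    and mv: "f (x0 + p + (v$i) *\<^sub>R axis i 1) - f (x0 + p + 0 *\<^sub>R axis i 1)
           = (v$i - 0) * partial i f (x0 + p + \<xi> *\<^sub>R axis i 1)"
    using MVT_between[OF partial_has_real_derivative_axis[OF D, where w="x0 + p"], of 0 "v$i"] by blast
  have "norm ((x0 + p + \<xi> *\<^sub>R axis i 1) - x0) \<le> norm v"
  proof (rule norm_le_componentwise_cart)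
    fix k
    show "norm (((x0 + p + \<xi> *\<^sub>R axis i 1) - x0) $ k) \<le> norm (v $ k)"
      using xi 2(2) sum_axis_nth[OF 2(1), of v k] by (auto simp: p_def axis_def)
  qed
  then have "\<bar>partial i f (x0 + p + \<xi> *\<^sub>R axis i 1) - partial i f x0\<bar> \<le> \<epsilon>"
    using v by (intro osc) simp
  then have "\<bar>v$i\<bar> * \<bar>partial i f (x0 + p + \<xi> *\<^sub>R axis i 1) - partial i f x0\<bar> \<le> \<bar>v$i\<bar> * \<epsilon>"
    by (rule mult_left_mono) simp
  then have step: "\<bar>f (x0 + p + (v$i) *\<^sub>R axis i 1) - f (x0 + p) - partial i f x0 * v$i\<bar> \<le> \<epsilon> * \<bar>v$i\<bar>"
    using mv by (simp add: abs_mult[symmetric] algebra_simps)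
  have IH: "\<bar>f (x0 + p) - f x0 - (\<Sum>i\<in>S. partial i f x0 * v$i)\<bar> \<le> \<epsilon> * (\<Sum>i\<in>S. \<bar>v$i\<bar>)"
    using 2(3) unfolding p_def .
  have "x0 + (\<Sum>i\<in>insert i S. (v$i) *\<^sub>R axis i 1) = x0 + p + (v$i) *\<^sub>R axis i 1"
    using 2(1,2) unfolding p_def by (simp add: algebra_simps)
  moreover have "(\<Sum>i\<in>insert i S. partial i f x0 * v$i) = partial i f x0 * v$i + (\<Sum>i\<in>S. partial i f x0 * v$i)"
    "(\<Sum>i\<in>insert i S. \<bar>v$i\<bar>) = \<bar>v$i\<bar> + (\<Sum>i\<in>S. \<bar>v$i\<bar>)"
    using 2(1,2) by simp_all
  moreover have "\<bar>f (x0 + p + (v$i) *\<^sub>R axis i 1) - f x0 - (partial i f x0 * v$i + (\<Sum>i\<in>S. partial i f x0 * v$i))\<bar>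
      \<le> \<bar>f (x0 + p) - f x0 - (\<Sum>i\<in>S. partial i f x0 * v$i)\<bar>
        + \<bar>f (x0 + p + (v$i) *\<^sub>R axis i 1) - f (x0 + p) - partial i f x0 * v$i\<bar>"
    using abs_triangle_ineq[of "f (x0 + p) - f x0 - (\<Sum>i\<in>S. partial i f x0 * v$i)"
        "f (x0 + p + (v$i) *\<^sub>R axis i 1) - f (x0 + p) - partial i f x0 * v$i"] by simp
  ultimately show ?case
    using IH step by (simp only: distrib_left)
qed

lemma has_derivative_continuous_partials:
  fixes f :: "real^'n \<Rightarrow> real"
  assumes D: "\<And>i y. (\<lambda>t. f (y + t *\<^sub>R axis i 1)) differentiable (at 0)"
    and C: "\<And>i. isCont (partial i f) x0"
  shows "(f has_derivative (\<lambda>v. grad f x0 \<bullet> v)) (at x0)"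
  unfolding has_derivative_at_alt
proof (intro conjI allI impI bounded_linear_inner_right)
  fix \<epsilon> :: real assume "\<epsilon> > 0"
  define \<epsilon>' where "\<epsilon>' = \<epsilon> / real CARD('n)"
  have "\<epsilon>' > 0" unfolding \<epsilon>'_def using \<open>\<epsilon> > 0\<close> by simp
  have "\<forall>\<^sub>F w in at x0. \<forall>i. dist (partial i f w) (partial i f x0) < \<epsilon>'"
    by (rule eventually_all_finite) (rule tendstoD[OF C[unfolded isCont_def] \<open>\<epsilon>' > 0\<close>])
  then obtain \<delta> where "\<delta> > 0"
    and \<delta>: "\<And>w. w \<noteq> x0 \<Longrightarrow> dist w x0 < \<delta> \<Longrightarrow> \<forall>i. dist (partial i f w) (partial i f x0) < \<epsilon>'"
    unfolding eventually_at by auto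
  have osc: "\<bar>partial i f w - partial i f x0\<bar> \<le> \<epsilon>'" if "norm (w - x0) < \<delta>" for w i
    using \<delta>[of w] that \<open>\<epsilon>' > 0\<close> by (cases "w = x0") (auto simp: dist_norm less_imp_le)
  show "\<exists>d>0. \<forall>y. norm (y - x0) < d \<longrightarrow> norm (f y - f x0 - grad f x0 \<bullet> (y - x0)) \<le> \<epsilon> * norm (y - x0)"
  proof (intro exI[of _ \<delta>] conjI allI impI \<open>\<delta> > 0\<close>)
    fix y assume y: "norm (y - x0) < \<delta>"
    define v where "v = y - x0"
    have "(\<Sum>i\<in>UNIV. (v$i) *\<^sub>R axis i (1::real)) = v"
      using sum_axis_nth[of UNIV v] by (simp add: vec_eq_iff)
    then have "\<bar>f y - f x0 - (\<Sum>i\<in>UNIV. partial i f x0 * v$i)\<bar> \<le> \<epsilon>' * (\<Sum>i\<in>UNIV. \<bar>v$i\<bar>)"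
      using increment_along_axes_le[OF D osc, where v=v and S=UNIV] y by (simp add: v_def)
    also have "\<dots> \<le> \<epsilon>' * (\<Sum>i\<in>(UNIV::'n set). norm v)"
      using \<open>\<epsilon>' > 0\<close> by (intro mult_left_mono sum_mono component_le_norm_cart) auto
    also have "\<dots> = \<epsilon> * norm v"
      by (simp add: \<epsilon>'_def)
    finally show "norm (f y - f x0 - grad f x0 \<bullet> (y - x0)) \<le> \<epsilon> * norm (y - x0)"
      by (simp add: v_def grad_def inner_vec_def)
  qed
qed

lemma second_difference_approx:
  fixes H :: "real^'n \<Rightarrow> real"
  assumes sm: "smooth H" and d: "d > 0"
    and near: "\<And>w. norm (w - y) \<le> 2 * d \<Longrightarrow> \<bar>partial k (partial j H) w - c\<bar> \<le> \<epsilon>"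
  shows "\<bar>(H (y + d *\<^sub>R axis k 1 + d *\<^sub>R axis j 1) - H (y + d *\<^sub>R axis j 1)
            - H (y + d *\<^sub>R axis k 1) + H y) - d^2 * c\<bar> \<le> d^2 * \<epsilon>"
proof -
  define g where "g = partial j H"
  have DH: "\<And>i y. (\<lambda>t. H (y + t *\<^sub>R axis i 1)) differentiable (at 0)"
    using smooth_iter_partial_differentiable_axis[OF sm, where ps="[]"] by simp
  have Dg: "\<And>i y. (\<lambda>t. g (y + t *\<^sub>R axis i 1)) differentiable (at 0)"
    using smooth_iter_partial_differentiable_axis[OF sm, where ps="[j]"] by (simp add: g_def)
  define u where "u x = H (y + d *\<^sub>R axis k 1 + x *\<^sub>R axis j 1) - H (y + x *\<^sub>R axis j 1)" for x
  have du: "(u has_real_derivative (g (y + d *\<^sub>R axis k 1 + x *\<^sub>R axis j 1) - g (y + x *\<^sub>R axis j 1))) (at x)" for x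
    unfolding u_def g_def by (intro DERIV_diff partial_has_real_derivative_axis[OF DH])
  obtain \<xi> where xi: "min 0 d \<le> \<xi>" "\<xi> \<le> max 0 d"
    and mu: "u d - u 0 = (d - 0) * (g (y + d *\<^sub>R axis k 1 + \<xi> *\<^sub>R axis j 1) - g (y + \<xi> *\<^sub>R axis j 1))"
    using MVT_between[OF du, of 0 d] by blast
  define v where "v t = g (y + \<xi> *\<^sub>R axis j 1 + t *\<^sub>R axis k 1)" for t
  obtain \<eta> where eta: "min 0 d \<le> \<eta>" "\<eta> \<le> max 0 d"
    and mv: "v d - v 0 = (d - 0) * partial k g (y + \<xi> *\<^sub>R axis j 1 + \<eta> *\<^sub>R axis k 1)"
    using MVT_between[OF partial_has_real_derivative_axis[OF Dg, where w="y + \<xi> *\<^sub>R axis j 1"], of 0 d]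
    unfolding v_def by blast
  define m where "m = partial k g (y + \<xi> *\<^sub>R axis j 1 + \<eta> *\<^sub>R axis k 1)"
  have "norm ((y + \<xi> *\<^sub>R axis j 1 + \<eta> *\<^sub>R axis k 1) - y)
      \<le> norm (\<xi> *\<^sub>R axis j (1::real)) + norm (\<eta> *\<^sub>R axis k (1::real))"
    by (simp add: order_trans[OF norm_triangle_ineq])
  also have "\<dots> \<le> 2 * d" using xi eta d by simp
  finally have "\<bar>m - c\<bar> \<le> \<epsilon>" unfolding m_def g_def by (rule near)
  have "H (y + d *\<^sub>R axis k 1 + d *\<^sub>R axis j 1) - H (y + d *\<^sub>R axis j 1)
            - H (y + d *\<^sub>R axis k 1) + H y = u d - u 0" unfolding u_def by simp
  also have "\<dots> = d^2 * m"
    using mu mv unfolding m_def v_def by (simp add: power2_eq_square algebra_simps)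
  finally show ?thesis
    using \<open>\<bar>m - c\<bar> \<le> \<epsilon>\<close> d by (simp add: right_diff_distrib[symmetric] abs_mult mult_left_mono)
qed

text \<open>Both mixed partials are limits of the same second difference, by
  second_difference_approx with j and k exchanged.\<close>
lemma partial_commute:
  fixes H :: "real^'n \<Rightarrow> real"
  assumes sm: "smooth H"
  shows "partial j (partial k H) y = partial k (partial j H) y"
proof -
  define c1 where "c1 = partial k (partial j H) y"
  define c2 where "c2 = partial j (partial k H) y"
  have bound: "\<bar>c1 - c2\<bar> \<le> 2 * \<epsilon>" if e: "\<epsilon> > 0" for \<epsilon>
  proof -
    obtain \<delta> where "\<delta> > 0"
      and \<delta>: "\<And>w. norm (w - y) < \<delta> \<Longrightarrow> \<bar>partial k (partial j H) w - c1\<bar> < \<epsilon> \<and> \<bar>partial j (partial k H) w - c2\<bar> < \<epsilon>"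
    proof -
      have "\<forall>\<^sub>F w in nhds y. dist (partial k (partial j H) w) c1 < \<epsilon> \<and> dist (partial j (partial k H) w) c2 < \<epsilon>"
        using smooth_iter_partial_isCont[OF sm, where ps="[k,j]" and x=y] smooth_iter_partial_isCont[OF sm, where ps="[j,k]" and x=y] e
        unfolding c1_def c2_def isCont_def by (auto intro!: eventually_conj tendstoD simp: tendsto_at_iff_tendsto_nhds)
      then show ?thesis using that unfolding eventually_nhds_metric by (auto simp: dist_norm dist_real_def)
    qed
    define d where "d = \<delta> / 3"
    have d: "d > 0" using \<open>\<delta> > 0\<close> by (simp add: d_def)
    have near: "\<bar>partial k (partial j H) w - c1\<bar> \<le> \<epsilon> \<and> \<bar>partial j (partial k H) w - c2\<bar> \<le> \<epsilon>"
      if "norm (w - y) \<le> 2 * d" for w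
      using \<delta>[of w] that \<open>\<delta> > 0\<close> by (auto simp: d_def)
    have a1: "\<bar>(H (y + d *\<^sub>R axis k 1 + d *\<^sub>R axis j 1) - H (y + d *\<^sub>R axis j 1)
            - H (y + d *\<^sub>R axis k 1) + H y) - d^2 * c1\<bar> \<le> d^2 * \<epsilon>"
      by (rule second_difference_approx[OF sm d]) (use near in blast)
    have a2: "\<bar>(H (y + d *\<^sub>R axis j 1 + d *\<^sub>R axis k 1) - H (y + d *\<^sub>R axis k 1)
            - H (y + d *\<^sub>R axis j 1) + H y) - d^2 * c2\<bar> \<le> d^2 * \<epsilon>"
      by (rule second_difference_approx[OF sm d]) (use near in blast)
    have swap: "y + d *\<^sub>R axis j 1 + d *\<^sub>R axis k 1 = y + d *\<^sub>R axis k 1 + d *\<^sub>R axis j (1::real)"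
      by (simp add: algebra_simps)
    have "d^2 * \<bar>c1 - c2\<bar> = \<bar>d^2 * c1 - d^2 * c2\<bar>"
      by (simp add: abs_mult right_diff_distrib[symmetric])
    then have "d^2 * \<bar>c1 - c2\<bar> \<le> d^2 * (2 * \<epsilon>)"
      using a1 a2 unfolding swap abs_le_iff by linarith
    then show ?thesis using d by simp
  qed
  have "\<bar>c1 - c2\<bar> \<le> 0"
  proof (rule field_le_epsilon)
    fix e :: real assume "0 < e"
    then show "\<bar>c1 - c2\<bar> \<le> 0 + e" using bound[of "e / 2"] by simp
  qed
  then have "c1 = c2" by simp
  then show ?thesis unfolding c1_def c2_def by simp
qed

section \<open>Linearisation of the coordinate increment discrete gradient\<close>

lemma divided_difference_mean_value:
  fixes F :: "real \<Rightarrow> real"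
  assumes F': "\<And>r. (F has_real_derivative F' r) (at r)"
  shows "\<exists>\<xi>. min s t \<le> \<xi> \<and> \<xi> \<le> max s t \<and>
    (if t = s then F' t else (F t - F s) / (t - s)) = F' \<xi> + c * ((s + t) / 2 - \<xi>)"
proof (cases "t = s")
  case False
  define Q where "Q r = F r - c * (r^2 / 2)" for r
  have dQ: "(Q has_real_derivative (F' r - c * r)) (at r)" for r
    unfolding Q_def by (auto intro!: derivative_eq_intros F')
  obtain \<xi> where "min s t \<le> \<xi>" "\<xi> \<le> max s t" and "Q t - Q s = (t - s) * (F' \<xi> - c * \<xi>)"
    using MVT_between[OF dQ, of s t] by blast
  moreover have "F t - F s = Q t - Q s + (t - s) * (c * ((s + t) / 2))"
    unfolding Q_def by (simp add: power2_eq_square field_simps)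
  ultimately show ?thesis
    using False by (intro exI[of _ \<xi>]) (simp add: field_simps)
qed (intro exI[of _ s], simp)

lemma norm_le_norm_Pair_coordinatewise:
  fixes x \<nu> \<nu>' :: "real^'n"
  assumes "\<And>k. \<bar>x$k\<bar> \<le> max \<bar>\<nu>$k\<bar> \<bar>\<nu>'$k\<bar>"
  shows "norm x \<le> norm (\<nu>, \<nu>')"
proof (rule power2_le_imp_le)
  have "(x$k)^2 \<le> (\<nu>$k)^2 + (\<nu>'$k)^2" for k
  proof -
    from assms[of k] have "\<bar>x$k\<bar> \<le> \<bar>\<nu>$k\<bar> \<or> \<bar>x$k\<bar> \<le> \<bar>\<nu>'$k\<bar>"
      by (simp add: le_max_iff_disj)
    then show ?thesis
      by (auto simp: abs_le_square_iff intro: add_increasing add_increasing2)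
  qed
  then have "(\<Sum>k\<in>UNIV. (x$k)^2) \<le> (\<Sum>k\<in>UNIV. (\<nu>$k)^2) + (\<Sum>k\<in>UNIV. (\<nu>'$k)^2)"
    by (simp add: sum.distrib[symmetric] sum_mono)
  then show "(norm x)^2 \<le> (norm (\<nu>, \<nu>'))^2"
    by (simp add: norm_Pair norm_vec_def L2_set_def sum_nonneg)
qed simp

definition coord_incr_mid :: "bool \<times> 'm::{finite,linorder} \<Rightarrow> real^(bool \<times> 'm) \<Rightarrow> real^(bool \<times> 'm) \<Rightarrow> real^(bool \<times> 'm)" where
  "coord_incr_mid j \<nu> \<nu>' = (\<chi> k. if idx_lt k j then \<nu>'$k else if k = j then (\<nu>$k + \<nu>'$k) / 2 else \<nu>$k)"

lemma bounded_linear_coord_incr_mid: "bounded_linear (\<lambda>p. coord_incr_mid j (fst p) (snd p))"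
  unfolding linear_conv_bounded_linear[symmetric]
  by (rule linearI) (auto simp: coord_incr_mid_def vec_eq_iff add_divide_distrib algebra_simps)

lemma idx_lt_irrefl [simp]: "\<not> idx_lt j j"
  by (simp add: idx_lt_def)

lemma hat_le_self [simp]: "hat_le j y y = y"
  by (simp add: hat_le_def vec_eq_iff)

lemma coord_incr_dg_nth_mean_value:
  fixes H :: "real^(bool \<times> 'm::{finite,linorder}) \<Rightarrow> real" and \<nu> \<nu>' :: "real^(bool \<times> 'm)"
    and j :: "bool \<times> 'm"
  assumes D: "\<And>i y. (\<lambda>t. H (y + t *\<^sub>R axis i 1)) differentiable (at 0)"
  defines "m \<equiv> (\<nu>$j + \<nu>'$j) / 2"
  shows "\<exists>\<xi>. min (\<nu>$j) (\<nu>'$j) \<le> \<xi> \<and> \<xi> \<le> max (\<nu>$j) (\<nu>'$j) \<and>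
    coord_incr_dg H (y + \<nu>) (y + \<nu>') $ j
      = partial j H (y + (coord_incr_mid j \<nu> \<nu>' + (\<xi> - m) *\<^sub>R axis j 1)) + c * (m - \<xi>)"
proof -
  define e where "e = axis j (1::real)"
  define w where "w = (\<chi> k. if idx_lt k j then \<nu>'$k else if k = j then 0 else \<nu>$k)"
  have hle: "hat_le j (y + \<nu>) (y + \<nu>') = y + (w + (\<nu>'$j) *\<^sub>R e)"
    by (auto simp: vec_eq_iff hat_le_def idx_le_def w_def e_def axis_def)
  have hlt: "hat_lt j (y + \<nu>) (y + \<nu>') = y + (w + (\<nu>$j) *\<^sub>R e)"
    by (auto simp: vec_eq_iff hat_lt_def w_def e_def axis_def)
  have mid: "coord_incr_mid j \<nu> \<nu>' + (\<xi> - m) *\<^sub>R e = w + \<xi> *\<^sub>R e" for \<xi>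
    by (auto simp: vec_eq_iff coord_incr_mid_def w_def e_def axis_def m_def)
  have "((\<lambda>r. H (y + (w + r *\<^sub>R e))) has_real_derivative partial j H (y + (w + r *\<^sub>R e))) (at r)" for r
    unfolding e_def add.assoc[symmetric] by (rule partial_has_real_derivative_axis[OF D])
  from divided_difference_mean_value[OF this, where c=c and s="\<nu>$j" and t="\<nu>'$j"]
  obtain \<xi> where "min (\<nu>$j) (\<nu>'$j) \<le> \<xi>" "\<xi> \<le> max (\<nu>$j) (\<nu>'$j)"
    and "(if \<nu>'$j = \<nu>$j then partial j H (y + (w + (\<nu>'$j) *\<^sub>R e))
          else (H (y + (w + (\<nu>'$j) *\<^sub>R e)) - H (y + (w + (\<nu>$j) *\<^sub>R e))) / (\<nu>'$j - \<nu>$j))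
       = partial j H (y + (w + \<xi> *\<^sub>R e)) + c * (m - \<xi>)"
    unfolding m_def by blast
  then show ?thesis
    unfolding coord_incr_dg_def e_def[symmetric] mid
    by (intro exI[of _ \<xi>]) (auto simp: hle hlt split: if_splits)
qed

lemma coord_incr_dg_nth_has_derivative:
  fixes H :: "real^(bool \<times> 'm::{finite,linorder}) \<Rightarrow> real"
  assumes sm: "smooth H"
  shows "((\<lambda>p. coord_incr_dg H (ybar + fst p) (ybar + snd p) $ j) has_derivative
          (\<lambda>p. grad (partial j H) ybar \<bullet> coord_incr_mid j (fst p) (snd p))) (at (0, 0))"
  unfolding has_derivative_at_alt
proof (intro conjI allI impI bounded_linear_compose[OF bounded_linear_inner_right bounded_linear_coord_incr_mid])
  define g where "g = partial j H"
  define c where "c = grad g ybar"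
  have dg0: "coord_incr_dg H ybar ybar $ j = g ybar"
    by (simp add: coord_incr_dg_def g_def)
  fix \<epsilon> :: real assume "\<epsilon> > 0"
  have "(g has_derivative (\<lambda>v. c \<bullet> v)) (at ybar)"
    unfolding c_def g_def
    using smooth_iter_partial_differentiable_axis[OF sm, where ps="[j]"]
      smooth_iter_partial_isCont[OF sm, where ps="[i, j]" for i]
    by (intro has_derivative_continuous_partials) simp_all
  then obtain \<delta> where "\<delta> > 0"
    and \<delta>': "\<And>y. norm (y - ybar) < \<delta> \<Longrightarrow> norm (g y - g ybar - c \<bullet> (y - ybar)) \<le> \<epsilon> * norm (y - ybar)"
    using \<open>\<epsilon> > 0\<close> unfolding has_derivative_at_alt by blast
  have \<delta>: "\<bar>g (ybar + u) - g ybar - c \<bullet> u\<bar> \<le> \<epsilon> * norm u" if "norm u < \<delta>" for u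
    using \<delta>'[of "ybar + u"] that by simp
  show "\<exists>d>0. \<forall>p. norm (p - (0, 0)) < d \<longrightarrow>
      norm (coord_incr_dg H (ybar + fst p) (ybar + snd p) $ j - coord_incr_dg H (ybar + fst (0, 0)) (ybar + snd (0, 0)) $ j
        - grad (partial j H) ybar \<bullet> coord_incr_mid j (fst (p - (0, 0))) (snd (p - (0, 0))))
      \<le> \<epsilon> * norm (p - (0, 0))"
  proof (intro exI[of _ \<delta>] conjI allI impI \<open>\<delta> > 0\<close>)
    fix p :: "(real^(bool \<times> 'm)) \<times> (real^(bool \<times> 'm))"
    assume "norm (p - (0, 0)) < \<delta>"
    then have p: "norm p < \<delta>" by (simp add: zero_prod_def[symmetric])
    obtain \<nu> \<nu>' where p_eq: "p = (\<nu>, \<nu>')" by fastforce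
    define m where "m = (\<nu>$j + \<nu>'$j) / 2"
    have DH: "\<And>i y. (\<lambda>t. H (y + t *\<^sub>R axis i 1)) differentiable (at 0)"
      using smooth_iter_partial_differentiable_axis[OF sm, where ps="[]"] by simp
    obtain \<xi> where \<xi>: "min (\<nu>$j) (\<nu>'$j) \<le> \<xi>" "\<xi> \<le> max (\<nu>$j) (\<nu>'$j)"
      and dg: "coord_incr_dg H (ybar + \<nu>) (ybar + \<nu>') $ j
        = g (ybar + (coord_incr_mid j \<nu> \<nu>' + (\<xi> - m) *\<^sub>R axis j 1)) + c$j * (m - \<xi>)"
      using coord_incr_dg_nth_mean_value[OF DH, where c="c$j" and \<nu>=\<nu> and \<nu>'=\<nu>' and j=j and y=ybar]
      unfolding g_def m_def by blast
    define u where "u = coord_incr_mid j \<nu> \<nu>' + (\<xi> - m) *\<^sub>R axis j 1"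
    have cu: "c \<bullet> coord_incr_mid j \<nu> \<nu>' = c \<bullet> u + c$j * (m - \<xi>)"
      by (simp add: u_def inner_add_right inner_axis algebra_simps)
    have "norm u \<le> norm p"
      unfolding p_eq
      by (rule norm_le_norm_Pair_coordinatewise)
        (use \<xi> in \<open>auto simp: u_def coord_incr_mid_def axis_def m_def\<close>)
    then have "\<bar>g (ybar + u) - g ybar - c \<bullet> u\<bar> \<le> \<epsilon> * norm p"
      using \<delta>[of u] p \<open>\<epsilon> > 0\<close> by (smt (verit) mult_left_mono)
    then show "norm (coord_incr_dg H (ybar + fst p) (ybar + snd p) $ j - coord_incr_dg H (ybar + fst (0, 0)) (ybar + snd (0, 0)) $ j
        - grad (partial j H) ybar \<bullet> coord_incr_mid j (fst (p - (0, 0))) (snd (p - (0, 0))))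
      \<le> \<epsilon> * norm (p - (0, 0))"
      unfolding p_eq g_def[symmetric] c_def[symmetric] by (simp add: dg dg0 cu u_def)
  qed
qed

lemma has_derivative_vec_nthI:
  fixes f :: "'a::real_normed_vector \<Rightarrow> real^'n"
  assumes "\<And>j. ((\<lambda>x. f x $ j) has_derivative (\<lambda>x. f' x $ j)) (at a)"
  shows "(f has_derivative f') (at a)"
proof (subst has_derivative_componentwise_within, intro ballI)
  fix i :: "real^'n" assume "i \<in> Basis"
  then obtain j where i: "i = axis j 1" by (auto simp: Basis_vec_def)
  show "((\<lambda>x. f x \<bullet> i) has_derivative (\<lambda>x. f' x \<bullet> i)) (at a)"
    unfolding i cart_eq_inner_axis[symmetric] by (rule assms)
qed

lemma coord_incr_dg_has_derivative:
  fixes H :: "real^(bool \<times> 'm::{finite,linorder}) \<Rightarrow> real"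
  assumes sm: "smooth H"
  shows "((\<lambda>p. coord_incr_dg H (ybar + fst p) (ybar + snd p)) has_derivative
          (\<lambda>p. (1/2) *\<^sub>R (hess H ybar *v (fst p + snd p)) + (1/2) *\<^sub>R (Rmat H ybar *v (snd p - fst p))))
         (at (0, 0))"
proof (rule has_derivative_vec_nthI)
  fix j
  have "((1/2) *\<^sub>R (hess H ybar *v (\<nu> + \<nu>')) + (1/2) *\<^sub>R (Rmat H ybar *v (\<nu>' - \<nu>))) $ j
      = (\<Sum>k\<in>UNIV. hess H ybar $ j $ k * coord_incr_mid j \<nu> \<nu>' $ k)" for \<nu> \<nu>'
    by (auto simp: matrix_vector_mult_def sum_distrib_left sum.distrib[symmetric] coord_incr_mid_def Rmat_def
        algebra_simps add_divide_distrib diff_divide_distrib intro!: sum.cong)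
  also have "\<dots> \<nu> \<nu>' = grad (partial j H) ybar \<bullet> coord_incr_mid j \<nu> \<nu>'" for \<nu> \<nu>'
    by (simp add: inner_vec_def grad_def hess_def partial_commute[OF sm, of j])
  finally have component: "((1/2) *\<^sub>R (hess H ybar *v (\<nu> + \<nu>')) + (1/2) *\<^sub>R (Rmat H ybar *v (\<nu>' - \<nu>))) $ j
      = grad (partial j H) ybar \<bullet> coord_incr_mid j \<nu> \<nu>'" for \<nu> \<nu>' .
  show "((\<lambda>p. coord_incr_dg H (ybar + fst p) (ybar + snd p) $ j) has_derivative
      (\<lambda>p. ((1/2) *\<^sub>R (hess H ybar *v (fst p + snd p)) + (1/2) *\<^sub>R (Rmat H ybar *v (snd p - fst p))) $ j)) (at (0, 0))"
    unfolding component by (rule coord_incr_dg_nth_has_derivative[OF sm])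
qed

section \<open>The linearised scheme\<close>

lemma matrix_inv_right:
  fixes M :: "real^'n^'n"
  assumes "invertible M"
  shows "M ** matrix_inv M = mat 1"
  using assms unfolding invertible_def matrix_inv_def by (metis (mono_tags, lifting) someI_ex)

lemma invertible_matrix_vector_mult_cancel:
  fixes M :: "real^'n^'n"
  assumes "invertible M"
  shows "M *v x = M *v y \<longleftrightarrow> x = y"
  using inj_matrix_vector_mult[OF assms] by (auto dest: injD)

lemma eq_matrix_inv_mult_iff:
  fixes M :: "real^'n^'n"
  assumes "invertible M"
  shows "x = matrix_inv M *v y \<longleftrightarrow> M *v x = y"
  by (metis assms invertible_matrix_vector_mult_cancel matrix_inv_right matrix_vector_mul_assoc
      matrix_vector_mul_lid)

lemma half_sum_diff:
  "(1/2::real) *\<^sub>R (b + d) - (1/2) *\<^sub>R (a + c) - ((1/2) *\<^sub>R (a - c) + (1/2) *\<^sub>R (b - d)) = d - (a::'a::real_vector)"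
proof -
  have "(b + d) - (a + c) - ((a - c) + (b - d)) = (2::real) *\<^sub>R (d - a)"
    by (simp add: algebra_simps scaleR_2)
  then show ?thesis by (simp only: scaleR_diff_right[symmetric] scaleR_add_right[symmetric]) simp
qed

text \<open>Used with E0 = exp(hF/2) and E1 = exp(-hF/2), so that the two sides are the cosh and sinh
  parts and the equivalence is the coth form of the exact step.\<close>
lemma half_step_iff:
  fixes E0 E1 :: "real^'n^'n"
  assumes e01: "E0 ** E1 = mat 1" and e10: "E1 ** E0 = mat 1"
  shows "((1/2) *\<^sub>R (E0 + E1)) *v (\<nu>' - \<nu>) = ((1/2) *\<^sub>R (E0 - E1)) *v (\<nu> + \<nu>' + u)
     \<longleftrightarrow> \<nu>' = (E0 ** E0) *v \<nu> + (E0 ** ((1/2) *\<^sub>R (E0 - E1))) *v u"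
proof -
  define Sh where "Sh = (1/2) *\<^sub>R (E0 - E1)"
  define Ch where "Ch = (1/2) *\<^sub>R (E0 + E1)"
  have "invertible E0" unfolding invertible_def using e01 e10 by blast
  have key: "Ch *v (\<nu>' - \<nu>) - Sh *v (\<nu> + \<nu>') = E1 *v \<nu>' - E0 *v \<nu>"
    unfolding Ch_def Sh_def scaleR_matrix_vector_assoc[symmetric] matrix_vector_mult_add_rdistrib
      matrix_vector_mult_diff_rdistrib matrix_vector_right_distrib matrix_vector_mult_diff_distrib
    by (rule half_sum_diff)
  have "Ch *v (\<nu>' - \<nu>) = Sh *v (\<nu> + \<nu>' + u) \<longleftrightarrow> E1 *v \<nu>' = E0 *v \<nu> + Sh *v u"
    by (metis key add.commute diff_eq_eq eq_diff_eq matrix_vector_right_distrib)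
  also have "\<dots> \<longleftrightarrow> E0 *v (E1 *v \<nu>') = E0 *v (E0 *v \<nu> + Sh *v u)"
    using invertible_matrix_vector_mult_cancel[OF \<open>invertible E0\<close>] by simp
  also have "\<dots> \<longleftrightarrow> \<nu>' = (E0 ** E0) *v \<nu> + (E0 ** Sh) *v u"
    by (simp only: matrix_vector_mul_assoc e01 matrix_vector_right_distrib matrix_vector_mul_lid)
  finally show ?thesis unfolding Ch_def Sh_def .
qed

lemma matrix_add_rdistrib: "(A + B) ** C = A ** C + B ** (C::real^'n^'n)"
  by (simp add: vec_eq_iff matrix_matrix_mult_def sum.distrib algebra_simps)

lemma matrix_diff_rdistrib: "(A - B) ** C = A ** C - B ** (C::real^'n^'n)"
  by (simp add: vec_eq_iff matrix_matrix_mult_def sum_subtractf algebra_simps)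

lemma matrix_diff_ldistrib: "C ** (A - B) = C ** A - C ** (B::real^'n^'n)"
  by (simp add: vec_eq_iff matrix_matrix_mult_def sum_subtractf algebra_simps)

lemma exact_step_iff_coth_form:
  fixes F :: "real^'n^'n"
  assumes invF: "invertible F" and invSh: "invertible (mat_sinh ((h/2) *\<^sub>R F))"
  shows "mat_coth ((h/2) *\<^sub>R F) *v (\<nu>' - \<nu>) = \<nu> + \<nu>' + 2 *\<^sub>R (matrix_inv F *v b)
     \<longleftrightarrow> \<nu>' = mat_exp (h *\<^sub>R F) *v \<nu> + ((mat_exp (h *\<^sub>R F) - mat 1) ** matrix_inv F) *v b"
proof -
  define E0 where "E0 = mat_exp ((h/2) *\<^sub>R F)"
  define E1 where "E1 = mat_exp ((-(h/2)) *\<^sub>R F)"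
  define Sh where "Sh = (1/2) *\<^sub>R (E0 - E1)"
  define Ch where "Ch = (1/2) *\<^sub>R (E0 + E1)"
  have e01: "E0 ** E1 = mat 1" and e10: "E1 ** E0 = mat 1" and e00: "E0 ** E0 = mat_exp (h *\<^sub>R F)"
    using mat_exp_scaleR_add[of "h/2" F "-(h/2)"] mat_exp_scaleR_add[of "-(h/2)" F "h/2"]
      mat_exp_scaleR_add[of "h/2" F "h/2"] mat_exp_zero
    unfolding E0_def E1_def by simp_all
  have sinh: "mat_sinh ((h/2) *\<^sub>R F) = Sh" and cosh: "mat_cosh ((h/2) *\<^sub>R F) = Ch"
    unfolding mat_sinh_def mat_cosh_def Sh_def Ch_def E0_def E1_def by (simp_all add: scaleR_minus_left)
  have "invertible Sh" using invSh unfolding sinh .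
  have "Sh ** Ch = Ch ** Sh"
    unfolding Sh_def Ch_def
    by (simp add: matrix_scalar_ac scalar_matrix_assoc[symmetric] matrix_add_ldistrib matrix_diff_ldistrib
        matrix_add_rdistrib matrix_diff_rdistrib e01 e10 scaleR_diff_right scaleR_add_right)
  then have "Sh ** (Ch ** matrix_inv Sh) = Ch"
    by (metis matrix_mul_assoc matrix_inv_right[OF \<open>invertible Sh\<close>] matrix_mul_rid)
  then have sinh_coth: "Sh *v (mat_coth ((h/2) *\<^sub>R F) *v x) = Ch *v x" for x
    unfolding mat_coth_def sinh cosh by (simp add: matrix_vector_mul_assoc)
  have "E0 ** Sh = (1/2) *\<^sub>R (mat_exp (h *\<^sub>R F) - mat 1)"
    unfolding Sh_def by (simp add: matrix_scalar_ac scalar_matrix_assoc[symmetric] matrix_diff_ldistrib e00 e01 scaleR_diff_right)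
  then have tail: "(E0 ** Sh) *v (2 *\<^sub>R (matrix_inv F *v b)) = ((mat_exp (h *\<^sub>R F) - mat 1) ** matrix_inv F) *v b"
    by (simp add: matrix_vector_mult_scaleR scaleR_matrix_vector_assoc[symmetric] matrix_vector_mul_assoc
        scalar_matrix_assoc[symmetric])
  have "mat_coth ((h/2) *\<^sub>R F) *v (\<nu>' - \<nu>) = \<nu> + \<nu>' + 2 *\<^sub>R (matrix_inv F *v b)
      \<longleftrightarrow> Ch *v (\<nu>' - \<nu>) = Sh *v (\<nu> + \<nu>' + 2 *\<^sub>R (matrix_inv F *v b))"
    by (simp only: sinh_coth[symmetric] invertible_matrix_vector_mult_cancel[OF \<open>invertible Sh\<close>])
  also have "\<dots> \<longleftrightarrow> \<nu>' = mat_exp (h *\<^sub>R F) *v \<nu> + ((mat_exp (h *\<^sub>R F) - mat 1) ** matrix_inv F) *v b"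
    unfolding Ch_def Sh_def half_step_iff[OF e01 e10] e00 tail[unfolded Sh_def] ..
  finally show ?thesis .
qed

lemma linear_scheme_iff_coth_form:
  fixes S A R C :: "real^'n^'n"
  assumes invF: "invertible (S ** A)" and invM: "invertible (S ** R + (S ** A) ** C)"
  shows "\<nu>' - \<nu> = (2 *\<^sub>R matrix_inv (S ** R + (S ** A) ** C))
             *v (S *v (g + ((1/2) *\<^sub>R (A *v (\<nu> + \<nu>')) + (1/2) *\<^sub>R (R *v (\<nu>' - \<nu>)))))
     \<longleftrightarrow> C *v (\<nu>' - \<nu>) = \<nu> + \<nu>' + 2 *\<^sub>R (matrix_inv (S ** A) *v (S *v g))"
proof -
  let ?M = "S ** R + (S ** A) ** C"
  have "\<nu>' - \<nu> = (2 *\<^sub>R matrix_inv ?M) *v (S *v (g + ((1/2) *\<^sub>R (A *v (\<nu> + \<nu>')) + (1/2) *\<^sub>R (R *v (\<nu>' - \<nu>)))))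
      \<longleftrightarrow> ?M *v (\<nu>' - \<nu>) = 2 *\<^sub>R (S *v (g + ((1/2) *\<^sub>R (A *v (\<nu> + \<nu>')) + (1/2) *\<^sub>R (R *v (\<nu>' - \<nu>)))))"
    unfolding scaleR_matrix_vector_assoc[symmetric] matrix_vector_mult_scaleR[symmetric]
    by (rule eq_matrix_inv_mult_iff[OF invM])
  also have "\<dots> \<longleftrightarrow> (S ** A) *v (C *v (\<nu>' - \<nu>)) = (S ** A) *v (\<nu> + \<nu>' + 2 *\<^sub>R (matrix_inv (S ** A) *v (S *v g)))"
  proof -
    have "(S ** A) *v (\<nu> + \<nu>' + 2 *\<^sub>R (matrix_inv (S ** A) *v (S *v g))) = (S ** A) *v (\<nu> + \<nu>') + 2 *\<^sub>R (S *v g)"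
      by (simp only: matrix_vector_right_distrib matrix_vector_mult_scaleR matrix_vector_mul_assoc
          matrix_inv_right[OF invF] matrix_vector_mul_lid matrix_mul_assoc matrix_mul_lid)
    moreover have "2 *\<^sub>R (S *v (g + ((1/2) *\<^sub>R (A *v (\<nu> + \<nu>')) + (1/2) *\<^sub>R (R *v (\<nu>' - \<nu>)))))
        = (S ** R) *v (\<nu>' - \<nu>) + ((S ** A) *v (\<nu> + \<nu>') + 2 *\<^sub>R (S *v g))"
      by (simp only: matrix_vector_right_distrib matrix_vector_mult_scaleR scaleR_add_right scaleR_scaleR
          matrix_vector_mul_assoc) (simp add: algebra_simps)
    ultimately show ?thesis
      by (simp add: matrix_vector_mult_add_rdistrib matrix_vector_mul_assoc[symmetric])
  qed
  also have "\<dots> \<longleftrightarrow> C *v (\<nu>' - \<nu>) = \<nu> + \<nu>' + 2 *\<^sub>R (matrix_inv (S ** A) *v (S *v g))"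
    by (rule invertible_matrix_vector_mult_cancel[OF invF])
  finally show ?thesis .
qed

theorem proposition6p10:
  fixes H :: "real ^ (bool \<times> 'm::{finite,linorder}) \<Rightarrow> real"
    and ybar :: "real ^ (bool \<times> 'm)"
    and h :: real
  assumes smoothH: "smooth H"
    and hpos: "h > 0"
    and invF': "invertible (symp ** hess H ybar)"
    and coth_wd: "invertible (mat_sinh ((h / 2) *\<^sub>R (symp ** hess H ybar)))"
    and theta_wd: "invertible (symp ** Rmat H ybar
          + (symp ** hess H ybar) ** mat_coth ((h / 2) *\<^sub>R (symp ** hess H ybar)))"
  shows "\<exists>L. (scheme_resid H ybar h has_derivative L) (at (0, 0)) \<and>
           (\<forall>\<nu> \<nu>'. scheme_resid H ybar h (0, 0) + L (\<nu>, \<nu>') = 0 \<longleftrightarrow>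
              \<nu>' = mat_exp (h *\<^sub>R (symp ** hess H ybar)) *v \<nu>
                   + ((mat_exp (h *\<^sub>R (symp ** hess H ybar)) - mat 1)
                       ** matrix_inv (symp ** hess H ybar)) *v (symp *v grad H ybar))"
proof -
  let ?F = "symp ** hess H ybar" and ?g = "symp *v grad H ybar"
  define \<theta> where "\<theta> = theta H ybar h"
  define DL where "DL p = (1/2) *\<^sub>R (hess H ybar *v (fst p + snd p)) + (1/2) *\<^sub>R (Rmat H ybar *v (snd p - fst p))"
    for p :: "(real^(bool \<times> 'm)) \<times> (real^(bool \<times> 'm))"
  have resid: "scheme_resid H ybar h = (\<lambda>p. snd p - fst p - \<theta> *v (symp *v coord_incr_dg H (ybar + fst p) (ybar + snd p)))"
    by (simp add: fun_eq_iff scheme_resid_def \<theta>_def split_beta)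
  have "(scheme_resid H ybar h has_derivative (\<lambda>p. snd p - fst p - \<theta> *v (symp *v DL p))) (at (0, 0))"
    unfolding resid DL_def
    by (intro has_derivative_diff has_derivative_snd has_derivative_fst has_derivative_ident
        bounded_linear.has_derivative[OF matrix_vector_mul_bounded_linear]
        coord_incr_dg_has_derivative[OF smoothH])
  moreover have "scheme_resid H ybar h (0, 0) + (\<nu>' - \<nu> - \<theta> *v (symp *v DL (\<nu>, \<nu>'))) = 0
      \<longleftrightarrow> \<nu>' = mat_exp (h *\<^sub>R ?F) *v \<nu> + ((mat_exp (h *\<^sub>R ?F) - mat 1) ** matrix_inv ?F) *v ?g"
    for \<nu> \<nu>'
  proof -
    have "scheme_resid H ybar h (0, 0) + (\<nu>' - \<nu> - \<theta> *v (symp *v DL (\<nu>, \<nu>'))) = 0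
        \<longleftrightarrow> \<nu>' - \<nu> = \<theta> *v (symp *v (grad H ybar + DL (\<nu>, \<nu>')))"
      by (auto simp: resid grad_def coord_incr_dg_def vec_eq_iff matrix_vector_right_distrib algebra_simps)
    also have "\<dots> \<longleftrightarrow> mat_coth ((h / 2) *\<^sub>R ?F) *v (\<nu>' - \<nu>) = \<nu> + \<nu>' + 2 *\<^sub>R (matrix_inv ?F *v ?g)"
      unfolding \<theta>_def theta_def DL_def fst_conv snd_conv
      by (rule linear_scheme_iff_coth_form[OF invF' theta_wd])
    also have "\<dots> \<longleftrightarrow> \<nu>' = mat_exp (h *\<^sub>R ?F) *v \<nu> + ((mat_exp (h *\<^sub>R ?F) - mat 1) ** matrix_inv ?F) *v ?g"
      by (rule exact_step_iff_coth_form[OF invF' coth_wd])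
    finally show ?thesis .
  qed
  ultimately show ?thesis
    by (intro exI[of _ "\<lambda>p. snd p - fst p - \<theta> *v (symp *v DL p)"] conjI allI) simp_all
qed

end
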